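(* Let $\Omega=\{1,\ldots,n\}$, let $\mathbf{p}=(p_1,\ldots,p_n)$ and $\mathbf{q}=(q_1,\ldots,q_n)$ be probability vectors, and let $1\le s\le n$; set $\Omega_1=\{1,\ldots,s\}$ and $\Omega_2=\{s+1,\ldots,n\}$. For weights $w=(w_{i,j})_{i\ne j}$ with $0\le w_{i,j}\le1$ and $w_{i,j}+w_{j,i}=1$, define $p_I^w(k)=p_k^2+\sum_{i\ne k}2p_ip_kw_{k,i}$ and $A(w)=\sum_{k=1}^n\min(q_k,p_I^w(k))$; let $P^\star(\mathrm{acc})=\max_w A(w)$. Call $w$ truncated if $w_{i,j}=1$ whenever $i\in\Omega_1,j\in\Omega_2$, and $w_{i,j}=1$ whenever $i,j\in\Omega_2$ with $i<j$ (the weights $w_{i,j}$ with $i,j\in\Omega_1$ being free). Let $\tilde w$ be a truncated weight family maximizing $\sum_{k=1}^s\min(q_k,p_I^{w}(k))$ over truncated $w$, and let $\tilde P(\mathrm{acc})=A(\tilde w)$. Then $$\tilde P(\mathrm{acc})\ \ge\ P^\star(\mathrm{acc})-\sum_{x\in\Omega_2}\big(q_x-p_x^2\big)^+ .$$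
   Context: Interpretation: with two draft tokens $X_1,X_2$ drawn i.i.d. from $\mathbf{p}$, $w_{i,j}$ is the probability of selecting token $i$ when the unordered input pair is $\{i,j\}$, $p_I^w$ is the distribution of the selected token, and $A(w)$ is the acceptance probability after applying single-draft speculative sampling against $\mathbf{q}$; by the optimal-transport characterization, $\max_w A(w)$ is the optimal acceptance probability. In the paper the tokens are additionally ordered so that $q_1-p_1^2\ge\cdots\ge q_n-p_n^2$. $(a)^+=\max(a,0)$. *)

theory Defs
  imports Complex_Main
begin

definition prob_vec :: "nat \<Rightarrow> (nat \<Rightarrow> real) \<Rightarrow> bool" where
  "prob_vec n p \<longleftrightarrow> (\<forall>i\<in>{1..n}. 0 \<le> p i) \<and> (\<Sum>i=1..n. p i) = 1"

definition valid_weight :: "nat \<Rightarrow> (nat \<Rightarrow> nat \<Rightarrow> real) \<Rightarrow> bool" where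
  "valid_weight n w \<longleftrightarrow>
     (\<forall>i\<in>{1..n}. \<forall>j\<in>{1..n}. i \<noteq> j \<longrightarrow>
        0 \<le> w i j \<and> w i j \<le> 1 \<and> w i j + w j i = 1)"

definition pI :: "nat \<Rightarrow> (nat \<Rightarrow> real) \<Rightarrow> (nat \<Rightarrow> nat \<Rightarrow> real) \<Rightarrow> nat \<Rightarrow> real" where
  "pI n p w k = (p k)^2 + (\<Sum>i\<in>{1..n} - {k}. 2 * p i * p k * w k i)"

definition accept :: "nat \<Rightarrow> (nat \<Rightarrow> real) \<Rightarrow> (nat \<Rightarrow> real) \<Rightarrow> (nat \<Rightarrow> nat \<Rightarrow> real) \<Rightarrow> real" where
  "accept n p q w = (\<Sum>k=1..n. min (q k) (pI n p w k))"

definition opt_accept :: "nat \<Rightarrow> (nat \<Rightarrow> real) \<Rightarrow> (nat \<Rightarrow> real) \<Rightarrow> real" where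
  "opt_accept n p q = (SUP w\<in>{w. valid_weight n w}. accept n p q w)"

definition truncated :: "nat \<Rightarrow> nat \<Rightarrow> (nat \<Rightarrow> nat \<Rightarrow> real) \<Rightarrow> bool" where
  "truncated n s w \<longleftrightarrow> valid_weight n w \<and>
     (\<forall>i\<in>{1..s}. \<forall>j\<in>{s+1..n}. w i j = 1) \<and>
     (\<forall>i\<in>{s+1..n}. \<forall>j\<in>{s+1..n}. i < j \<longrightarrow> w i j = 1)"

definition partial_accept :: "nat \<Rightarrow> nat \<Rightarrow> (nat \<Rightarrow> real) \<Rightarrow> (nat \<Rightarrow> real) \<Rightarrow> (nat \<Rightarrow> nat \<Rightarrow> real) \<Rightarrow> real" where
  "partial_accept n s p q w = (\<Sum>k=1..s. min (q k) (pI n p w k))"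

end

theory Submission
  imports Defs
begin

text \<open>Any weight family can be truncated without lowering the mass it sends to the
  tokens of \<open>\<Omega>\<^sub>1\<close>: keep its weights inside \<open>\<Omega>\<^sub>1\<close> and let \<open>\<Omega>\<^sub>1\<close> win every pair against \<open>\<Omega>\<^sub>2\<close>.
  Hence the optimal truncated family is at least as good on \<open>\<Omega>\<^sub>1\<close> as any family.
  On \<open>\<Omega>\<^sub>2\<close> an arbitrary family gains at most \<open>q\<^sub>x\<close> per token, whereas every family already
  delivers at least \<open>min q\<^sub>x p\<^sub>x\<^sup>2\<close>, since a token is selected whenever both drafts equal it;
  the difference is \<open>(q\<^sub>x - p\<^sub>x\<^sup>2)\<^sup>+\<close>.\<close>

definition truncate_weight :: "nat \<Rightarrow> (nat \<Rightarrow> nat \<Rightarrow> real) \<Rightarrow> nat \<Rightarrow> nat \<Rightarrow> real" where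
  "truncate_weight s w i j =
     (if i \<le> s \<and> j \<le> s then w i j
      else if i \<le> s then 1
      else if j \<le> s then 0
      else if i < j then 1 else 0)"

lemma valid_weight_const_half: "valid_weight n (\<lambda>i j. 1 / 2)"
  unfolding valid_weight_def by simp

lemma truncated_truncate_weight:
  assumes "valid_weight n w"
  shows "truncated n s (truncate_weight s w)"
proof -
  have "valid_weight n (truncate_weight s w)"
    using assms unfolding valid_weight_def truncate_weight_def by auto
  then show ?thesis
    unfolding truncated_def truncate_weight_def by auto
qed

lemma truncate_weight_ge:
  assumes "valid_weight n w" and "i \<in> {1..n}" and "j \<in> {1..n}" and "i \<noteq> j" and "i \<le> s"
  shows "w i j \<le> truncate_weight s w i j"
  using assms unfolding valid_weight_def truncate_weight_def by auto

lemma pI_mono_weight: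
  assumes "\<forall>i\<in>{1..n}. 0 \<le> p i" and "k \<in> {1..n}"
    and "\<And>i. i \<in> {1..n} - {k} \<Longrightarrow> w k i \<le> w' k i"
  shows "pI n p w k \<le> pI n p w' k"
  unfolding pI_def
proof (rule add_left_mono, rule sum_mono)
  fix i assume i: "i \<in> {1..n} - {k}"
  have "0 \<le> 2 * p i * p k" using assms(1,2) i by auto
  with assms(3)[OF i] show "2 * p i * p k * w k i \<le> 2 * p i * p k * w' k i"
    by (rule mult_left_mono)
qed

lemma power2_le_pI:
  assumes "\<forall>i\<in>{1..n}. 0 \<le> p i" and "valid_weight n w" and "k \<in> {1..n}"
  shows "(p k)\<^sup>2 \<le> pI n p w k"
proof -
  have "0 \<le> (\<Sum>i\<in>{1..n} - {k}. 2 * p i * p k * w k i)"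
    using assms unfolding valid_weight_def by (intro sum_nonneg) auto
  then show ?thesis unfolding pI_def by simp
qed

lemma partial_accept_le_truncate_weight:
  assumes "\<forall>i\<in>{1..n}. 0 \<le> p i" and "valid_weight n w" and "s \<le> n"
  shows "partial_accept n s p q w \<le> partial_accept n s p q (truncate_weight s w)"
  unfolding partial_accept_def
proof (rule sum_mono)
  fix k assume k: "k \<in> {1..s}"
  have "pI n p w k \<le> pI n p (truncate_weight s w) k"
    using assms k by (intro pI_mono_weight truncate_weight_ge) auto
  then show "min (q k) (pI n p w k) \<le> min (q k) (pI n p (truncate_weight s w) k)"
    by (rule min.mono[OF order_refl])
qed

lemma accept_eq_partial_accept_add:
  assumes "s \<le> n"
  shows "accept n p q w = partial_accept n s p q w + (\<Sum>k=s+1..n. min (q k) (pI n p w k))"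
proof -
  have "{1..n} = {1..s} \<union> {s+1..n}" and "{1..s} \<inter> {s+1..n} = {}"
    using assms by auto
  then show ?thesis
    unfolding accept_def partial_accept_def by (simp add: sum.union_disjoint)
qed

lemma accept_le_partial_accept_add:
  assumes "s \<le> n"
  shows "accept n p q w \<le> partial_accept n s p q w + (\<Sum>k=s+1..n. q k)"
  unfolding accept_eq_partial_accept_add[OF assms] by (intro add_left_mono sum_mono) simp

lemma partial_accept_add_le_accept:
  assumes "\<forall>i\<in>{1..n}. 0 \<le> p i" and "valid_weight n w" and "s \<le> n"
  shows "partial_accept n s p q w + (\<Sum>k=s+1..n. min (q k) ((p k)\<^sup>2)) \<le> accept n p q w"
  unfolding accept_eq_partial_accept_add[OF assms(3)]
proof (intro add_left_mono sum_mono)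
  fix k assume "k \<in> {s+1..n}"
  then have "(p k)\<^sup>2 \<le> pI n p w k" using assms by (intro power2_le_pI) auto
  then show "min (q k) ((p k)\<^sup>2) \<le> min (q k) (pI n p w k)"
    by (rule min.mono[OF order_refl])
qed

lemma accept_le_truncated_optimum:
  assumes "\<forall>i\<in>{1..n}. 0 \<le> p i" and "s \<le> n"
    and "truncated n s wt"
    and "\<forall>w. truncated n s w \<longrightarrow> partial_accept n s p q w \<le> partial_accept n s p q wt"
    and "valid_weight n w"
  shows "accept n p q w \<le> accept n p q wt + (\<Sum>x=s+1..n. max (q x - (p x)\<^sup>2) 0)"
proof -
  have "partial_accept n s p q w \<le> partial_accept n s p q (truncate_weight s w)"
    using assms by (intro partial_accept_le_truncate_weight)
  also have "\<dots> \<le> partial_accept n s p q wt"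
    using assms(4) truncated_truncate_weight[OF assms(5)] by blast
  finally have partial: "partial_accept n s p q w \<le> partial_accept n s p q wt" .
  have "valid_weight n wt" using assms(3) unfolding truncated_def by blast
  then have wt: "partial_accept n s p q wt + (\<Sum>k=s+1..n. min (q k) ((p k)\<^sup>2)) \<le> accept n p q wt"
    using assms by (intro partial_accept_add_le_accept)
  have "(\<Sum>k=s+1..n. q k)
      = (\<Sum>k=s+1..n. min (q k) ((p k)\<^sup>2)) + (\<Sum>x=s+1..n. max (q x - (p x)\<^sup>2) 0)"
    unfolding sum.distrib[symmetric] by (rule sum.cong) auto
  then show ?thesis
    using accept_le_partial_accept_add[OF assms(2), of p q w] partial wt by linarith
qed

theorem mainTheorem5:
  fixes n s :: nat and p q :: "nat \<Rightarrow> real" and wt :: "nat \<Rightarrow> nat \<Rightarrow> real"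
  assumes "prob_vec n p" and "prob_vec n q"
    and "1 \<le> s" and "s \<le> n"
    and "truncated n s wt"
    and "\<forall>w. truncated n s w \<longrightarrow> partial_accept n s p q w \<le> partial_accept n s p q wt"
  shows "accept n p q wt \<ge> opt_accept n p q - (\<Sum>x=s+1..n. max (q x - (p x)^2) 0)"
proof -
  have p_nonneg: "\<forall>i\<in>{1..n}. 0 \<le> p i"
    using assms(1) unfolding prob_vec_def by blast
  have "opt_accept n p q \<le> accept n p q wt + (\<Sum>x=s+1..n. max (q x - (p x)\<^sup>2) 0)"
    unfolding opt_accept_def
  proof (rule cSUP_least)
    show "{w. valid_weight n w} \<noteq> {}"
      using valid_weight_const_half by blast
  qed (use accept_le_truncated_optimum[OF p_nonneg assms(4-6)] in simp)
  then show ?thesis by linarith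
qed

end
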